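(* Let $v$ be a vector in a Hilbert space, let $\Pi'_1,\ldots,\Pi'_k$ be orthogonal projectors, and let $\Pi_i:=I-\Pi'_i$ for each $i$. Then \[ \|v-\Pi'_k\cdots\Pi'_1v\|_2^2\le\sum_{i=1}^k\|\Pi_iv\|_2^2 . \]
   Context: $\|\cdot\|_2$ denotes the Hilbert space (Euclidean) norm; $I$ is the identity operator. *)

theory Defs
  imports "HOL-Analysis.Analysis"
begin

definition orth_proj :: "('a::real_inner \<Rightarrow> 'a) \<Rightarrow> bool" where
  "orth_proj P \<longleftrightarrow> bounded_linear P \<and> (\<forall>x. P (P x) = P x)
     \<and> (\<forall>x y. inner (P x) y = inner x (P y))"

primrec proj_chain :: "(nat \<Rightarrow> 'a \<Rightarrow> 'a) \<Rightarrow> nat \<Rightarrow> 'a \<Rightarrow> 'a" where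
  "proj_chain P 0 v = v"
| "proj_chain P (Suc k) v = P (Suc k) (proj_chain P k v)"

end

theory Submission
  imports Defs
begin

text \<open>Writing \<open>v - P w = (v - P v) + P (v - w)\<close> splits the error of one more projection
  into two orthogonal pieces, the second of which is no longer than \<open>v - w\<close>; so each
  projector in the chain adds at most \<open>\<parallel>v - P v\<parallel>\<^sup>2\<close> to the squared error.\<close>

lemma orth_proj_linear: "orth_proj P \<Longrightarrow> linear P"
  unfolding orth_proj_def by (blast intro: bounded_linear.linear)

lemma orth_proj_inner_eq:
  assumes "orth_proj P"
  shows "inner (P x) (P y) = inner x (P y)"
proof -
  have "inner (P x) (P y) = inner x (P (P y))"
    using assms unfolding orth_proj_def by blast
  also have "\<dots> = inner x (P y)"
    using assms unfolding orth_proj_def by simp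
  finally show ?thesis .
qed

lemma orth_proj_norm_le:
  assumes "orth_proj P"
  shows "norm (P x) \<le> norm x"
proof -
  have "(norm (P x))\<^sup>2 = inner x (P x)"
    using orth_proj_inner_eq[OF assms] by (simp add: power2_norm_eq_inner)
  also have "\<dots> \<le> norm x * norm (P x)"
    by (rule norm_cauchy_schwarz)
  finally have "norm (P x) * norm (P x) \<le> norm x * norm (P x)"
    by (simp add: power2_eq_square)
  then show ?thesis
    by (cases "norm (P x) = 0") (auto simp: mult_le_cancel_right)
qed

lemma orth_proj_residual_orthogonal:
  assumes "orth_proj P"
  shows "inner (x - P x) (P y) = 0"
  using orth_proj_inner_eq[OF assms] by (simp add: inner_diff_left)

lemma orth_proj_error_step:
  assumes "orth_proj P"
  shows "(norm (v - P w))\<^sup>2 \<le> (norm (v - P v))\<^sup>2 + (norm (v - w))\<^sup>2"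
proof -
  have split: "v - P w = (v - P v) + P (v - w)"
    using linear_diff[OF orth_proj_linear[OF assms]] by simp
  have "(norm (v - P w))\<^sup>2 = (norm (v - P v))\<^sup>2 + (norm (P (v - w)))\<^sup>2"
    unfolding split power2_norm_eq_inner
    using orth_proj_residual_orthogonal[OF assms, of v "v - w"]
    by (simp add: inner_add_left inner_add_right inner_commute)
  also have "\<dots> \<le> (norm (v - P v))\<^sup>2 + (norm (v - w))\<^sup>2"
    using orth_proj_norm_le[OF assms, of "v - w"] by (simp add: power_mono)
  finally show ?thesis .
qed

theorem lemma2:
  fixes v :: "'a::{real_inner, complete_space}"
    and P' :: "nat \<Rightarrow> 'a \<Rightarrow> 'a"
    and k :: nat
  assumes "\<forall>i\<in>{1..k}. orth_proj (P' i)"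
  shows "(norm (v - proj_chain P' k v))\<^sup>2 \<le> (\<Sum>i=1..k. (norm (v - P' i v))\<^sup>2)"
  using assms
proof (induction k)
  case 0
  then show ?case by simp
next
  case (Suc k)
  have "(norm (v - proj_chain P' (Suc k) v))\<^sup>2
      \<le> (norm (v - P' (Suc k) v))\<^sup>2 + (norm (v - proj_chain P' k v))\<^sup>2"
    using orth_proj_error_step[of "P' (Suc k)"] Suc.prems by simp
  also have "\<dots> \<le> (norm (v - P' (Suc k) v))\<^sup>2 + (\<Sum>i=1..k. (norm (v - P' i v))\<^sup>2)"
    using Suc by simp
  finally show ?case
    by (simp add: add.commute)
qed

end
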